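(* Let $G=(V,E)$ be a finite graph, $f$ a weight function of one of the two types described in the context, $g(S)=f(S)/|S|$, and $S^*$ a nonempty vertex set maximizing $g$. Let $\alpha\ge 1$ and let a peeling algorithm produce nested vertex sets $V=S_0\supseteq S_1\supseteq\cdots$ and return $S^P=\arg\max_{S_i}g(S_i)$, where this algorithm is an $\alpha$-approximation, i.e. $g(S^P)\ge g(S^* )/\alpha$. If some $S_i$ contains a long-tail vertex $u$ (i.e. $u\in S_i$ with $w_u(S_i)<g(S^* )/\alpha$), then $S_i\neq S^P$.
   Context: Let $G=(V,E)$ be a graph; $E[S]$ denotes the edges with both endpoints in $S$. The weight function $f$ is either (Type A) $f(S)=\sum_{u_i\in S}a_i+\sum_{(u_i,u_j)\in E[S]}c_{ij}$ with fixed $a_i\ge 0$, $c_{ij}\ge0$, or (Type B) $f(S)=$ number of $k$-cliques in the induced subgraph $G[S]$. The density is $g(S)=f(S)/|S|$ for nonempty $S$, and the peeling weight of $u\in S$ is $w_u(S)=f(S)-f(S\setminus\{u\})$. Definition (long-tail vertex): given an $\alpha$-approximation densest-subgraph algorithm and a set $S\subseteq V$, a vertex $u\in S$ is a long-tail vertex if $w_u(S)<g(S^* )/\alpha$, where $S^*$ is an optimal (density-maximizing) vertex set. *)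

theory Defs
  imports Complex_Main
begin

definition simple_graph :: "'a set \<Rightarrow> 'a set set \<Rightarrow> bool" where
  "simple_graph V E \<longleftrightarrow> finite V \<and> (\<forall>e\<in>E. e \<subseteq> V \<and> card e = 2)"

definition induced_edges :: "'a set set \<Rightarrow> 'a set \<Rightarrow> 'a set set" where
  "induced_edges E S = {e \<in> E. e \<subseteq> S}"

definition fA :: "('a \<Rightarrow> real) \<Rightarrow> ('a set \<Rightarrow> real) \<Rightarrow> 'a set set \<Rightarrow> 'a set \<Rightarrow> real" where
  "fA a c E S = (\<Sum>v\<in>S. a v) + (\<Sum>e\<in>induced_edges E S. c e)"

definition is_clique :: "'a set set \<Rightarrow> 'a set \<Rightarrow> bool" where
  "is_clique E C \<longleftrightarrow> (\<forall>x\<in>C. \<forall>y\<in>C. x \<noteq> y \<longrightarrow> {x, y} \<in> E)"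

definition fB :: "'a set set \<Rightarrow> nat \<Rightarrow> 'a set \<Rightarrow> real" where
  "fB E k S = real (card {C. C \<subseteq> S \<and> card C = k \<and> is_clique E C})"

definition density :: "('a set \<Rightarrow> real) \<Rightarrow> 'a set \<Rightarrow> real" where
  "density f S = f S / real (card S)"

definition peel_weight :: "('a set \<Rightarrow> real) \<Rightarrow> 'a \<Rightarrow> 'a set \<Rightarrow> real" where
  "peel_weight f u S = f S - f (S - {u})"

definition admissible_weight :: "'a set set \<Rightarrow> ('a set \<Rightarrow> real) \<Rightarrow> bool" where
  "admissible_weight E f \<longleftrightarrow>
     (\<exists>a c. (\<forall>v. a v \<ge> 0) \<and> (\<forall>e. c e \<ge> 0) \<and> f = fA a c E) \<or>
     (\<exists>k\<ge>1. f = fB E k)"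

definition densest :: "'a set \<Rightarrow> ('a set \<Rightarrow> real) \<Rightarrow> 'a set \<Rightarrow> bool" where
  "densest V f Sopt \<longleftrightarrow> Sopt \<subseteq> V \<and> Sopt \<noteq> {} \<and>
     (\<forall>S. S \<subseteq> V \<and> S \<noteq> {} \<longrightarrow> density f S \<le> density f Sopt)"

definition peeling_seq :: "'a set \<Rightarrow> ('a set \<Rightarrow> real) \<Rightarrow> (nat \<Rightarrow> 'a set) \<Rightarrow> bool" where
  "peeling_seq V f S \<longleftrightarrow> S 0 = V \<and>
     (\<forall>i < card V. \<exists>u\<in>S i. (\<forall>v\<in>S i. peel_weight f u (S i) \<le> peel_weight f v (S i)) \<and>
        S (Suc i) = S i - {u})"

definition peeling_output :: "'a set \<Rightarrow> ('a set \<Rightarrow> real) \<Rightarrow> (nat \<Rightarrow> 'a set) \<Rightarrow> nat \<Rightarrow> bool" where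
  "peeling_output V f S p \<longleftrightarrow> p \<le> card V \<and> S p \<noteq> {} \<and>
     (\<forall>i\<le>card V. S i \<noteq> {} \<longrightarrow> density f (S i) \<le> density f (S p))"

end

theory Submission
  imports Defs
begin

(* If S_i = S^P, the vertex v peeled from S_i weighs at most as much as the long-tail
   vertex, hence less than g(S^P) = g(S_i). Removing a vertex whose peeling weight is below
   the density strictly increases the density, so S_(i+1) would beat S^P; and S_i cannot be
   the singleton {v}, since there w_v = f {v} = g {v}.
   Only the guarantee g(S^P) >= g(S_opt)/alpha is used; neither the optimality of S_opt nor
   alpha >= 1 plays a role. *)

lemma fA_empty:
  assumes "{} \<notin> E"
  shows "fA a c E {} = 0"
proof -
  have "induced_edges E {} = {}" using assms by (auto simp: induced_edges_def)
  then show ?thesis by (simp add: fA_def)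
qed

lemma fB_empty: "k \<ge> 1 \<Longrightarrow> fB E k {} = 0"
  by (simp add: fB_def)

lemma admissible_weight_empty:
  assumes "simple_graph V E" "admissible_weight E f"
  shows "f {} = 0"
proof -
  have "{} \<notin> E" using assms(1) by (force simp: simple_graph_def)
  then show ?thesis
    using assms(2) fA_empty fB_empty unfolding admissible_weight_def by blast
qed

lemma peeling_seq_card:
  assumes "finite V" "peeling_seq V f S"
  shows "j \<le> card V \<Longrightarrow> S j \<subseteq> V \<and> card (S j) = card V - j"
proof (induction j)
  case 0
  then show ?case using assms(2) by (simp add: peeling_seq_def)
next
  case (Suc j)
  then have IH: "S j \<subseteq> V" "card (S j) = card V - j" and "j < card V" by auto
  then obtain u where "u \<in> S j" "S (Suc j) = S j - {u}"
    using assms(2) unfolding peeling_seq_def by blast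
  moreover have "finite (S j)" using IH(1) assms(1) finite_subset by blast
  ultimately show ?case using IH by auto
qed

lemma peel_weight_singleton: "f {} = 0 \<Longrightarrow> peel_weight f v {v} = density f {v}"
  by (simp add: peel_weight_def density_def)

lemma density_Diff_gt:
  assumes "finite S" "v \<in> S" "S - {v} \<noteq> {}" "peel_weight f v S < density f S"
  shows "density f S < density f (S - {v})"
proof -
  define m where "m = card (S - {v})"
  have "m > 0" using assms(1,3) by (simp add: m_def card_gt_0_iff)
  have card_S: "real (card S) = m + 1" using assms(1,2) card_gt_0_iff[of S]
    by (auto simp: m_def card_Diff_singleton of_nat_diff)
  have "f S - f (S - {v}) < f S / (m + 1)"
    using assms(4) card_S by (simp add: peel_weight_def density_def)
  then have "f S * m < f (S - {v}) * (m + 1)"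
    by (simp add: field_simps)
  then show ?thesis
    using \<open>m > 0\<close> card_S by (simp add: density_def m_def[symmetric] field_simps)
qed

theorem lemma5p2:
  fixes V :: "'a set" and E :: "'a set set" and f :: "'a set \<Rightarrow> real"
    and Sopt :: "'a set" and S :: "nat \<Rightarrow> 'a set" and p i :: nat and u :: 'a and \<alpha> :: real
  assumes "simple_graph V E"
    and "admissible_weight E f"
    and "densest V f Sopt"
    and "\<alpha> \<ge> 1"
    and "peeling_seq V f S"
    and "peeling_output V f S p"
    and "density f (S p) \<ge> density f Sopt / \<alpha>"
    and "i \<le> card V"
    and "u \<in> S i"
    and "peel_weight f u (S i) < density f Sopt / \<alpha>"
  shows "S i \<noteq> S p"
proof
  assume Si_eq: "S i = S p"
  have "finite V" using assms(1) by (simp add: simple_graph_def)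
  then have fin: "finite (S i)" and "card (S i) = card V - i"
    using peeling_seq_card[OF _ assms(5,8)] finite_subset by blast+
  then have "i < card V" using assms(9) by (metis card_gt_0_iff empty_iff zero_less_diff)
  then obtain v where "v \<in> S i" and v_min: "peel_weight f v (S i) \<le> peel_weight f u (S i)"
    and step: "S (Suc i) = S i - {v}"
    using assms(5,9) unfolding peeling_seq_def by blast
  have "peel_weight f v (S i) < density f (S p)"
    using v_min assms(7,10) by linarith
  then have light: "peel_weight f v (S i) < density f (S i)" by (simp add: Si_eq)
  have "S i - {v} \<noteq> {}"
  proof
    assume "S i - {v} = {}"
    with \<open>v \<in> S i\<close> have "S i = {v}" by blast
    then show False
      using light peel_weight_singleton[of f v] admissible_weight_empty[OF assms(1,2)] by simp
  qed
  then have "density f (S p) < density f (S (Suc i))"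
    using density_Diff_gt[OF fin \<open>v \<in> S i\<close> _ light] Si_eq step by simp
  moreover have "density f (S (Suc i)) \<le> density f (S p)"
    using assms(6) Suc_leI[OF \<open>i < card V\<close>] \<open>S i - {v} \<noteq> {}\<close> step
    unfolding peeling_output_def by metis
  ultimately show False by simp
qed

end
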